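(* Let $Q$ be a complete quiver and let $j$ be a mutable vertex which is cycle-preserving for $Q$ and is red or green. Then every vertex that is red or green in $Q$ is red or green in $\mu_j(Q)$. Moreover, for every mutable vertex $k$ that is neither red nor green in $Q$, either the numbers $b_{ku}$ for all frozen $u$ are the same in $Q$ and in $\mu_j(Q)$, or $k$ is red or green in $\mu_j(Q)$.
   Context: A quiver is a finite directed multigraph with no loops and no oriented 2-cycles, whose vertex set is partitioned into mutable and frozen vertices; arrows between two frozen vertices are ignored. $b_{ik}$ = number of arrows $i\to k$ minus number of arrows $k\to i$; $Q|_S$ is the induced subquiver on $S$. Mutation $\mu_j$ at mutable $j$: for each path $i\to j\to k$ add $b_{ij}b_{jk}$ arrows $i\to k$, reverse all arrows at $j$, cancel 2-cycles. Complete: at least one arrow between every pair of vertices at least one of which is mutable. A 3-vertex (sub)quiver is an oriented 3-cycle if it has at most one frozen vertex and its underlying directed graph is not acyclic. A mutable vertex $j$ is cycle-preserving for $Q$ if whenever $Q|_{\{i,j,k\}}$ is an oriented 3-cycle containing $j$, so is $\mu_j(Q)|_{\{i,j,k\}}$. A mutable vertex adjacent to at least one frozen vertex is red (resp. green) if all arrows between it and frozen vertices point towards (resp. away from) it. *)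

theory Defs
  imports Main
begin

text \<open>A quiver (finite, no loops, no oriented 2-cycles) is encoded by its vertex set,
its set of frozen vertices and its exchange matrix b, where b i k = (#arrows i->k) - (#arrows k->i).
Since there are no 2-cycles, the number of arrows i->k is max (b i k) 0.
Arrows between two frozen vertices are ignored, so b vanishes on frozen-frozen pairs.\<close>

record 'v quiver =
  verts :: "'v set"
  frozen :: "'v set"
  bmat :: "'v \<Rightarrow> 'v \<Rightarrow> int"

definition mutable :: "'v quiver \<Rightarrow> 'v set" where
  "mutable Q = verts Q - frozen Q"

definition wf_quiver :: "'v quiver \<Rightarrow> bool" where
  "wf_quiver Q \<longleftrightarrow> finite (verts Q) \<and> frozen Q \<subseteq> verts Q
     \<and> (\<forall>i k. bmat Q i k = - bmat Q k i)
     \<and> (\<forall>i k. i \<notin> verts Q \<or> k \<notin> verts Q \<longrightarrow> bmat Q i k = 0)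
     \<and> (\<forall>i k. i \<in> frozen Q \<and> k \<in> frozen Q \<longrightarrow> bmat Q i k = 0)"

definition arrows :: "'v quiver \<Rightarrow> 'v \<Rightarrow> 'v \<Rightarrow> int" where
  "arrows Q i k = max (bmat Q i k) 0"

text \<open>Mutation at j: for each path i->j->k add (#i->j)(#j->k) arrows i->k, reverse all arrows
at j, cancel 2-cycles (the net count below), and ignore frozen-frozen arrows.\<close>
definition mutate :: "'v \<Rightarrow> 'v quiver \<Rightarrow> 'v quiver" where
  "mutate j Q = Q \<lparr> bmat := (\<lambda>i k.
      if i = j \<or> k = j then - bmat Q i k
      else if i \<in> frozen Q \<and> k \<in> frozen Q then 0
      else bmat Q i k + arrows Q i j * arrows Q j k - arrows Q k j * arrows Q j i) \<rparr>"

definition complete_quiver :: "'v quiver \<Rightarrow> bool" where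
  "complete_quiver Q \<longleftrightarrow> (\<forall>x\<in>verts Q. \<forall>y\<in>verts Q. x \<noteq> y \<and> (x \<in> mutable Q \<or> y \<in> mutable Q)
       \<longrightarrow> bmat Q x y \<noteq> 0)"

definition oriented_3cycle :: "'v quiver \<Rightarrow> 'v set \<Rightarrow> bool" where
  "oriented_3cycle Q S \<longleftrightarrow> S \<subseteq> verts Q \<and> card S = 3 \<and> card (S \<inter> frozen Q) \<le> 1
     \<and> \<not> acyclic {(x, y). x \<in> S \<and> y \<in> S \<and> \<not> (x \<in> frozen Q \<and> y \<in> frozen Q) \<and> bmat Q x y > 0}"

definition cycle_preserving :: "'v quiver \<Rightarrow> 'v \<Rightarrow> bool" where
  "cycle_preserving Q j \<longleftrightarrow> j \<in> mutable Q \<and>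
     (\<forall>i k. oriented_3cycle Q {i, j, k} \<longrightarrow> oriented_3cycle (mutate j Q) {i, j, k})"

definition red :: "'v quiver \<Rightarrow> 'v \<Rightarrow> bool" where
  "red Q v \<longleftrightarrow> v \<in> mutable Q \<and> (\<exists>u\<in>frozen Q. bmat Q v u \<noteq> 0)
     \<and> (\<forall>u\<in>frozen Q. arrows Q v u = 0)"

definition green :: "'v quiver \<Rightarrow> 'v \<Rightarrow> bool" where
  "green Q v \<longleftrightarrow> v \<in> mutable Q \<and> (\<exists>u\<in>frozen Q. bmat Q v u \<noteq> 0)
     \<and> (\<forall>u\<in>frozen Q. arrows Q u v = 0)"

end

theory Submission
  imports Defs
begin

(* Let j be green. For a mutable v other than j, the frozen row of v changes only if v -> j,
   and then b_vu becomes b_vu + b_vj b_ju. This is positive if v -> u; otherwise, by completeness,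
   u -> v -> j -> u is an oriented 3-cycle, and preserving it forces v -> u in mu_j(Q). So v turns
   green. The red case follows by passing to the opposite quiver, which exchanges red and green
   and commutes with mutation; j itself just swaps colour. *)

lemma verts_mutate [simp]: "verts (mutate j Q) = verts Q"
  and frozen_mutate [simp]: "frozen (mutate j Q) = frozen Q"
  and mutable_mutate [simp]: "mutable (mutate j Q) = mutable Q"
  by (simp_all add: mutate_def mutable_def)

lemma bmat_mutate:
  "bmat (mutate j Q) i k =
    (if i = j \<or> k = j then - bmat Q i k
     else if i \<in> frozen Q \<and> k \<in> frozen Q then 0
     else bmat Q i k + arrows Q i j * arrows Q j k - arrows Q k j * arrows Q j i)"
  by (simp add: mutate_def)

lemma wf_quiver_skew: "wf_quiver Q \<Longrightarrow> bmat Q i k = - bmat Q k i"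
  unfolding wf_quiver_def by blast

lemma wf_quiver_mutate:
  assumes "wf_quiver Q"
  shows "wf_quiver (mutate j Q)"
proof -
  have "bmat (mutate j Q) i k = - bmat (mutate j Q) k i" for i k
    using wf_quiver_skew[OF assms, of i k] by (simp add: bmat_mutate algebra_simps)
  moreover have "bmat (mutate j Q) i k = 0" if "i \<notin> verts Q \<or> k \<notin> verts Q" for i k
  proof -
    have "bmat Q i k = 0"
      and "bmat Q i j = 0 \<and> bmat Q j i = 0 \<or> bmat Q j k = 0 \<and> bmat Q k j = 0"
      using that assms unfolding wf_quiver_def by metis+
    then show ?thesis by (auto simp: bmat_mutate arrows_def)
  qed
  moreover have "bmat (mutate j Q) i k = 0" if "i \<in> frozen Q" "k \<in> frozen Q" for i k
  proof -
    have "bmat Q i k = 0"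
      using that assms unfolding wf_quiver_def by blast
    then show ?thesis by (simp add: bmat_mutate that)
  qed
  ultimately show ?thesis
    using assms unfolding wf_quiver_def verts_mutate frozen_mutate by blast
qed

lemma bmat_neg_iff: "wf_quiver Q \<Longrightarrow> bmat Q i k < 0 \<longleftrightarrow> bmat Q k i > 0"
  using wf_quiver_skew[of Q i k] by linarith

lemma bmat_diag: "wf_quiver Q \<Longrightarrow> bmat Q i i = 0"
  using wf_quiver_skew[of Q i i] by simp

lemma complete_quiver_bmat_nonzero:
  assumes "complete_quiver Q" "x \<in> mutable Q" "y \<in> verts Q" "x \<noteq> y"
  shows "bmat Q x y \<noteq> 0"
  using assms unfolding complete_quiver_def mutable_def by blast

lemma red_iff:
  "red Q v \<longleftrightarrow>
    v \<in> mutable Q \<and> (\<exists>u\<in>frozen Q. bmat Q v u \<noteq> 0) \<and> (\<forall>u\<in>frozen Q. bmat Q v u \<le> 0)"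
  unfolding red_def arrows_def by (simp add: max_def)

lemma green_iff:
  assumes "wf_quiver Q"
  shows "green Q v \<longleftrightarrow>
    v \<in> mutable Q \<and> (\<exists>u\<in>frozen Q. bmat Q v u \<noteq> 0) \<and> (\<forall>u\<in>frozen Q. bmat Q v u \<ge> 0)"
proof -
  have "arrows Q u v = 0 \<longleftrightarrow> bmat Q v u \<ge> 0" for u
    unfolding arrows_def wf_quiver_skew[OF assms, of u v] by linarith
  then show ?thesis
    unfolding green_def by simp
qed

lemma red_mutate_self: "wf_quiver Q \<Longrightarrow> red (mutate j Q) j \<longleftrightarrow> green Q j"
  and green_mutate_self: "wf_quiver Q \<Longrightarrow> green (mutate j Q) j \<longleftrightarrow> red Q j"
  by (auto simp: red_iff green_iff wf_quiver_mutate bmat_mutate)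

lemma red_green_mutate_if_frozen_row_unchanged:
  assumes "wf_quiver Q" "\<forall>u\<in>frozen Q. bmat (mutate j Q) v u = bmat Q v u"
  shows "red (mutate j Q) v \<longleftrightarrow> red Q v" "green (mutate j Q) v \<longleftrightarrow> green Q v"
  using assms by (simp_all add: red_iff green_iff wf_quiver_mutate)

definition opposite_quiver :: "'v quiver \<Rightarrow> 'v quiver" where
  "opposite_quiver Q = Q\<lparr>bmat := \<lambda>i k. - bmat Q i k\<rparr>"

lemma verts_opposite [simp]: "verts (opposite_quiver Q) = verts Q"
  and frozen_opposite [simp]: "frozen (opposite_quiver Q) = frozen Q"
  and mutable_opposite [simp]: "mutable (opposite_quiver Q) = mutable Q"
  and bmat_opposite [simp]: "bmat (opposite_quiver Q) i k = - bmat Q i k"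
  by (simp_all add: opposite_quiver_def mutable_def)

lemma arrows_opposite:
  assumes "wf_quiver Q"
  shows "arrows (opposite_quiver Q) i k = arrows Q k i"
  unfolding arrows_def by (simp add: wf_quiver_skew[OF assms, of k i])

lemma wf_quiver_opposite: "wf_quiver Q \<Longrightarrow> wf_quiver (opposite_quiver Q)"
  unfolding wf_quiver_def bmat_opposite verts_opposite frozen_opposite
  by (metis minus_minus neg_equal_0_iff_equal)

lemma complete_quiver_opposite: "complete_quiver (opposite_quiver Q) \<longleftrightarrow> complete_quiver Q"
  unfolding complete_quiver_def by simp

lemma mutate_opposite:
  assumes "wf_quiver Q"
  shows "mutate j (opposite_quiver Q) = opposite_quiver (mutate j Q)"
proof (rule quiver.equality)
  show "bmat (mutate j (opposite_quiver Q)) = bmat (opposite_quiver (mutate j Q))"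
    by (simp add: fun_eq_iff bmat_mutate arrows_opposite[OF assms])
qed (simp_all add: mutate_def opposite_quiver_def)

lemma red_opposite: "wf_quiver Q \<Longrightarrow> red (opposite_quiver Q) v \<longleftrightarrow> green Q v"
  and green_opposite: "wf_quiver Q \<Longrightarrow> green (opposite_quiver Q) v \<longleftrightarrow> red Q v"
  by (simp_all add: red_iff green_iff wf_quiver_opposite)

lemma oriented_3cycle_opposite:
  assumes "wf_quiver Q"
  shows "oriented_3cycle (opposite_quiver Q) S \<longleftrightarrow> oriented_3cycle Q S"
proof -
  let ?r = "\<lambda>Q. {(x, y). x \<in> S \<and> y \<in> S \<and> \<not> (x \<in> frozen Q \<and> y \<in> frozen Q) \<and> bmat Q x y > 0}"
  have "?r (opposite_quiver Q) = (?r Q)\<inverse>"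
    by (auto simp: bmat_neg_iff[OF assms])
  then show ?thesis
    unfolding oriented_3cycle_def by simp
qed

lemma cycle_preserving_opposite:
  assumes "wf_quiver Q"
  shows "cycle_preserving (opposite_quiver Q) j \<longleftrightarrow> cycle_preserving Q j"
  unfolding cycle_preserving_def mutate_opposite[OF assms]
  by (simp add: oriented_3cycle_opposite assms wf_quiver_mutate)

lemma acyclic_of_rank:
  fixes f :: "'a \<Rightarrow> nat"
  assumes "\<And>x y. (x, y) \<in> r \<Longrightarrow> f x < f y"
  shows "acyclic r"
  by (rule wf_acyclic, rule wf_subset[OF wf_measure[of f]]) (auto dest: assms)

lemma oriented_3cycle_of_arrows:
  assumes wf: "wf_quiver Q" and "a \<in> verts Q" "j \<in> mutable Q" "c \<in> verts Q"
    and not_frozen: "\<not> (a \<in> frozen Q \<and> c \<in> frozen Q)"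
    and arrows: "bmat Q a j > 0" "bmat Q j c > 0" "bmat Q c a > 0"
  shows "oriented_3cycle Q {a, j, c}"
proof -
  have distinct: "a \<noteq> j" "j \<noteq> c" "c \<noteq> a"
    using arrows bmat_diag[OF wf] by fastforce+
  have j: "j \<in> verts Q" "j \<notin> frozen Q"
    using \<open>j \<in> mutable Q\<close> unfolding mutable_def by auto
  have "{a, j, c} \<inter> frozen Q \<subseteq> {a} \<or> {a, j, c} \<inter> frozen Q \<subseteq> {c}"
    using not_frozen j by auto
  then have at_most_one_frozen: "card ({a, j, c} \<inter> frozen Q) \<le> 1"
    using card_mono[of "{a}"] card_mono[of "{c}"] by fastforce
  let ?r = "{(x, y). x \<in> {a, j, c} \<and> y \<in> {a, j, c} \<and> \<not> (x \<in> frozen Q \<and> y \<in> frozen Q)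
                     \<and> bmat Q x y > 0}"
  have "(a, j) \<in> ?r" "(j, c) \<in> ?r" "(c, a) \<in> ?r"
    using arrows j not_frozen by auto
  then have "(a, a) \<in> ?r\<^sup>+"
    by (meson r_into_trancl trancl_into_trancl)
  then show ?thesis
    unfolding oriented_3cycle_def acyclic_def
    using distinct j at_most_one_frozen assms(2,4) by auto
qed

text \<open>Mutation at \<open>j\<close> reverses the arrows \<open>a \<rightarrow> j\<close> and \<open>j \<rightarrow> c\<close>, so the mutated triangle
  can only be an oriented cycle if it contains \<open>a \<rightarrow> c\<close>.\<close>

lemma cycle_preserving_reverses_third_arrow:
  assumes wf: "wf_quiver Q" and cp: "cycle_preserving Q j"
    and verts: "a \<in> verts Q" "c \<in> verts Q"
    and not_frozen: "\<not> (a \<in> frozen Q \<and> c \<in> frozen Q)"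
    and arrows: "bmat Q a j > 0" "bmat Q j c > 0" "bmat Q c a > 0"
  shows "bmat (mutate j Q) a c > 0"
proof (rule ccontr)
  assume no_arrow: "\<not> bmat (mutate j Q) a c > 0"
  have "j \<in> mutable Q"
    using cp unfolding cycle_preserving_def by blast
  then have "oriented_3cycle Q {a, j, c}"
    using oriented_3cycle_of_arrows[OF wf verts(1) _ verts(2) not_frozen arrows] by blast
  then have cycle: "oriented_3cycle (mutate j Q) {a, j, c}"
    using cp unfolding cycle_preserving_def by blast
  define rank :: "'a \<Rightarrow> nat" where "rank x = (if x = c then 0 else if x = j then 1 else 2)" for x
  have distinct: "a \<noteq> j" "j \<noteq> c" "c \<noteq> a"
    using arrows bmat_diag[OF wf] by fastforce+
  have reversed: "bmat (mutate j Q) a j < 0" "bmat (mutate j Q) j c < 0"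
    using arrows by (simp_all add: bmat_mutate)
  have rank_increases: "rank x < rank y"
    if "x \<in> {a, j, c}" "y \<in> {a, j, c}" "bmat (mutate j Q) x y > 0" for x y
    using that distinct reversed no_arrow bmat_diag[OF wf_quiver_mutate[OF wf], of j x]
    unfolding rank_def by auto
  have "acyclic {(x, y). x \<in> {a, j, c} \<and> y \<in> {a, j, c} \<and> \<not> (x \<in> frozen Q \<and> y \<in> frozen Q)
                        \<and> bmat (mutate j Q) x y > 0}"
    by (rule acyclic_of_rank[of _ rank]) (use rank_increases in blast)
  with cycle show False
    unfolding oriented_3cycle_def by simp
qed

lemma frozen_row_mutate_at_green:
  assumes wf: "wf_quiver Q" and complete: "complete_quiver Q" and cp: "cycle_preserving Q j"
    and green: "green Q j" and v: "v \<in> mutable Q" "v \<noteq> j"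
  shows "(\<forall>u\<in>frozen Q. bmat (mutate j Q) v u = bmat Q v u) \<or> green (mutate j Q) v"
proof -
  have v_verts: "v \<in> verts Q" "v \<notin> frozen Q" and j_frozen: "j \<notin> frozen Q"
    using v green unfolding green_def mutable_def by auto
  have frozen_verts: "frozen Q \<subseteq> verts Q"
    using wf unfolding wf_quiver_def by blast
  have j_to_frozen: "bmat Q j u > 0" if "u \<in> frozen Q" for u
    using green that complete_quiver_bmat_nonzero[OF complete, of j u] frozen_verts j_frozen
    unfolding green_iff[OF wf] by fastforce
  have row: "bmat (mutate j Q) v u = bmat Q v u + arrows Q v j * bmat Q j u"
    if "u \<in> frozen Q" for u
    using that v v_verts j_to_frozen[OF that] bmat_neg_iff[OF wf, of u j]
    by (auto simp: bmat_mutate arrows_def)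
  show ?thesis
  proof (cases "bmat Q v j > 0")
    case False
    then show ?thesis
      using row by (simp add: arrows_def)
  next
    case v_to_j: True
    have "bmat (mutate j Q) v u > 0" if u: "u \<in> frozen Q" for u
    proof (cases "bmat Q v u > 0")
      case True
      then show ?thesis
        using row[OF u] v_to_j j_to_frozen[OF u] by (simp add: arrows_def add_pos_pos)
    next
      case False
      then have "bmat Q u v > 0"
        using complete_quiver_bmat_nonzero[OF complete v(1), of u] u frozen_verts v_verts
          bmat_neg_iff[OF wf, of v u] by fastforce
      then show ?thesis
        using cycle_preserving_reverses_third_arrow[OF wf cp, of v u] v_to_j j_to_frozen[OF u]
          u frozen_verts v_verts by blast
    qed
    moreover have "frozen Q \<noteq> {}"
      using green unfolding green_def by blast
    ultimately show ?thesis
      using v by (auto simp: green_iff[OF wf_quiver_mutate[OF wf]] less_imp_le)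
  qed
qed

lemma frozen_row_mutate_at_red:
  assumes wf: "wf_quiver Q" and "complete_quiver Q" "cycle_preserving Q j" "red Q j"
    and "v \<in> mutable Q" "v \<noteq> j"
  shows "(\<forall>u\<in>frozen Q. bmat (mutate j Q) v u = bmat Q v u) \<or> red (mutate j Q) v"
  using frozen_row_mutate_at_green[of "opposite_quiver Q" j v] assms
  by (simp add: wf_quiver_opposite complete_quiver_opposite cycle_preserving_opposite
      mutate_opposite red_opposite green_opposite wf_quiver_mutate)

theorem mainTheorem5:
  fixes Q :: "'v quiver" and j :: 'v
  assumes "wf_quiver Q"
    and "complete_quiver Q"
    and "j \<in> mutable Q"
    and "cycle_preserving Q j"
    and "red Q j \<or> green Q j"
  shows "(\<forall>v. red Q v \<or> green Q v \<longrightarrow> red (mutate j Q) v \<or> green (mutate j Q) v)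
    \<and> (\<forall>k\<in>mutable Q. \<not> (red Q k \<or> green Q k) \<longrightarrow>
         (\<forall>u\<in>frozen Q. bmat (mutate j Q) k u = bmat Q k u) \<or> red (mutate j Q) k \<or> green (mutate j Q) k)"
proof -
  have rows: "(\<forall>u\<in>frozen Q. bmat (mutate j Q) v u = bmat Q v u)
      \<or> red (mutate j Q) v \<or> green (mutate j Q) v"
    if "v \<in> mutable Q" "v \<noteq> j" for v
    using assms(5) frozen_row_mutate_at_red[OF assms(1,2,4) _ that]
      frozen_row_mutate_at_green[OF assms(1,2,4) _ that] by blast
  have "red (mutate j Q) v \<or> green (mutate j Q) v" if "red Q v \<or> green Q v" for v
  proof (cases "v = j")
    case True
    then show ?thesis
      using assms(5) red_mutate_self[OF assms(1)] green_mutate_self[OF assms(1)] by blast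
  next
    case False
    have "v \<in> mutable Q"
      using that unfolding red_def green_def by blast
    then show ?thesis
      using rows[OF _ False] that red_green_mutate_if_frozen_row_unchanged[OF assms(1)] by blast
  qed
  moreover have "k \<noteq> j" if "\<not> (red Q k \<or> green Q k)" for k
    using that assms(5) by blast
  ultimately show ?thesis
    using rows by blast
qed

end
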